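(* Let $k$ be a commutative ring, and let $A$ and $B$ be Frobenius algebras over $k$ with Frobenius coordinates $(\phi,x_i,y_i)$ and $(\psi,z_j,w_j)$ respectively. Suppose $B$ is a subalgebra of $A$, $A_B$ is projective, and the Nakayama automorphism $\eta_A$ of $A$ satisfies $\eta_A(B)=B$. Then $A/B$ is a $\beta$-Frobenius extension with $\beta=\eta_B\circ\eta_A^{-1}|_B$ (where $\eta_B$ is the Nakayama automorphism of $B$), and a $\beta$-Frobenius homomorphism is given by $F(a)=\sum_j\phi(az_j)w_j$ for $a\in A$; i.e. $a\mapsto F(a\,\cdot)$ is a $B$-$A$-bimodule isomorphism $A\to{}_\beta\mathrm{Hom}_B(A_B,B_B)$.
   Context: Frobenius coordinates $(\phi,x_i,y_i)$ for a $k$-algebra $A$ (finitely generated projective over $k$): $\phi\in\mathrm{Hom}_k(A,k)$ and finitely many $x_i,y_i\in A$ with $\sum_ix_i\phi(y_ia)=a=\sum_i\phi(ax_i)y_i$ for all $a\in A$. The Nakayama automorphism $\eta_A$ (relative to $\phi$) is defined by $\phi(\eta_A(a)x)=\phi(xa)$ for all $a,x\in A$; similarly $\eta_B$ relative to $\psi$. For an automorphism $\beta$ of $B$, $A/B$ is a $\beta$-Frobenius extension if $A_B$ is finitely generated projective and $A\cong{}_\beta\mathrm{Hom}_B(A_B,B_B)$ as $B$-$A$-bimodules, where $(b\cdot\chi\cdot a)(x)=\beta(b)\chi(ax)$. *)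

theory Defs
  imports Main
begin

text \<open>A k-algebra A is modelled as a type 'a of class ring_1 together with a ring
  homomorphism iota from the commutative ring k (type 'k) into the centre of A.
  The k-module structure is c . a = iota c * a.\<close>

definition k_algebra :: "('k::comm_ring_1 \<Rightarrow> 'a::ring_1) \<Rightarrow> bool" where
  "k_algebra \<iota> \<longleftrightarrow> \<iota> 1 = 1 \<and> (\<forall>c d. \<iota> (c + d) = \<iota> c + \<iota> d)
     \<and> (\<forall>c d. \<iota> (c * d) = \<iota> c * \<iota> d) \<and> (\<forall>c a. \<iota> c * a = a * \<iota> c)"

definition subalgebra :: "('k::comm_ring_1 \<Rightarrow> 'a::ring_1) \<Rightarrow> 'a set \<Rightarrow> bool" where
  "subalgebra \<iota> B \<longleftrightarrow> 1 \<in> B \<and> (\<forall>c. \<iota> c \<in> B)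
     \<and> (\<forall>a\<in>B. \<forall>b\<in>B. a + b \<in> B \<and> a * b \<in> B \<and> - a \<in> B)"

definition k_linear_on :: "('k::comm_ring_1 \<Rightarrow> 'a::ring_1) \<Rightarrow> 'a set \<Rightarrow> ('a \<Rightarrow> 'k) \<Rightarrow> bool" where
  "k_linear_on \<iota> S f \<longleftrightarrow> (\<forall>a\<in>S. \<forall>b\<in>S. f (a + b) = f a + f b)
     \<and> (\<forall>c. \<forall>a\<in>S. f (\<iota> c * a) = c * f a)"

text \<open>Frobenius coordinates (phi, x_i, y_i), i < n, for the k-algebra S
  (S = UNIV for A itself, S = B for a subalgebra):
  sum_i x_i phi(y_i a) = a = sum_i phi(a x_i) y_i for all a in S.\<close>
definition frobenius_coords ::
  "('k::comm_ring_1 \<Rightarrow> 'a::ring_1) \<Rightarrow> 'a set \<Rightarrow> ('a \<Rightarrow> 'k) \<Rightarrow> (nat \<Rightarrow> 'a) \<Rightarrow> (nat \<Rightarrow> 'a) \<Rightarrow> nat \<Rightarrow> bool" where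
  "frobenius_coords \<iota> S \<phi> x y n \<longleftrightarrow> k_linear_on \<iota> S \<phi> \<and> (\<forall>i<n. x i \<in> S \<and> y i \<in> S)
     \<and> (\<forall>a\<in>S. (\<Sum>i<n. x i * \<iota> (\<phi> (y i * a))) = a \<and> (\<Sum>i<n. \<iota> (\<phi> (a * x i)) * y i) = a)"

definition nakayama_on :: "'a::ring_1 set \<Rightarrow> ('a \<Rightarrow> 'k) \<Rightarrow> 'a \<Rightarrow> 'a" where
  "nakayama_on S \<phi> a = (THE e. e \<in> S \<and> (\<forall>x\<in>S. \<phi> (e * x) = \<phi> (x * a)))"

definition right_B_linear :: "'a::ring_1 set \<Rightarrow> ('a \<Rightarrow> 'a) \<Rightarrow> bool" where
  "right_B_linear B f \<longleftrightarrow> (\<forall>a. f a \<in> B) \<and> (\<forall>a a'. f (a + a') = f a + f a')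
     \<and> (\<forall>a. \<forall>b\<in>B. f (a * b) = f a * b)"

definition hom_right :: "'a::ring_1 set \<Rightarrow> ('a \<Rightarrow> 'a) set" where
  "hom_right B = {f. right_B_linear B f}"

text \<open>A_B is projective: the canonical epimorphism from the free right B-module on the
  set A (basis e_x, x in A, e_x \<mapsto> x) splits by a right B-linear section
  a \<mapsto> sum_x e_x f_x(a).\<close>
definition projective_right :: "'a::ring_1 set \<Rightarrow> bool" where
  "projective_right B \<longleftrightarrow> (\<exists>f :: 'a \<Rightarrow> 'a \<Rightarrow> 'a. (\<forall>x. right_B_linear B (f x))
     \<and> (\<forall>a. finite {x. f x a \<noteq> 0}) \<and> (\<forall>a. (\<Sum>x\<in>{x. f x a \<noteq> 0}. x * f x a) = a))"

text \<open>A_B is finitely generated projective: a direct summand of B^n_B, i.e. the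
  epimorphism B^n \<rightarrow> A, (b_i) \<mapsto> sum g_i b_i, splits by a right B-linear section.\<close>
definition fg_projective_right :: "'a::ring_1 set \<Rightarrow> bool" where
  "fg_projective_right B \<longleftrightarrow> (\<exists>(n::nat) (g :: nat \<Rightarrow> 'a) (f :: nat \<Rightarrow> 'a \<Rightarrow> 'a).
     (\<forall>i<n. right_B_linear B (f i)) \<and> (\<forall>a. (\<Sum>i<n. g i * f i a) = a))"

definition ring_aut_on :: "'a::ring_1 set \<Rightarrow> ('a \<Rightarrow> 'a) \<Rightarrow> bool" where
  "ring_aut_on B \<beta> \<longleftrightarrow> bij_betw \<beta> B B \<and> \<beta> 1 = 1
     \<and> (\<forall>a\<in>B. \<forall>b\<in>B. \<beta> (a + b) = \<beta> a + \<beta> b \<and> \<beta> (a * b) = \<beta> a * \<beta> b)"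

text \<open>Phi : A \<rightarrow> _beta Hom_B(A_B,B_B) is an isomorphism of B-A-bimodules, where
  (b . chi . a)(x) = beta(b) chi(a x).\<close>
definition bimod_iso_twisted_dual :: "'a::ring_1 set \<Rightarrow> ('a \<Rightarrow> 'a) \<Rightarrow> ('a \<Rightarrow> 'a \<Rightarrow> 'a) \<Rightarrow> bool" where
  "bimod_iso_twisted_dual B \<beta> \<Phi> \<longleftrightarrow> bij_betw \<Phi> UNIV (hom_right B)
     \<and> (\<forall>a a'. \<Phi> (a + a') = (\<lambda>t. \<Phi> a t + \<Phi> a' t))
     \<and> (\<forall>b\<in>B. \<forall>a a'. \<Phi> (b * a * a') = (\<lambda>t. \<beta> b * \<Phi> a (a' * t)))"

definition beta_frobenius_ext :: "'a::ring_1 set \<Rightarrow> ('a \<Rightarrow> 'a) \<Rightarrow> bool" where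
  "beta_frobenius_ext B \<beta> \<longleftrightarrow> fg_projective_right B \<and> ring_aut_on B \<beta>
     \<and> (\<exists>\<Phi>. bimod_iso_twisted_dual B \<beta> \<Phi>)"

end

theory Submission
  imports Defs
begin

(*
  For c \<in> B the trace identity \<psi>(F(a) c) = \<phi>(a c) holds, and by nondegeneracy of \<psi> on B it
  characterises F(a). Right B-linearity of F and the twisted left linearity
  F(\<eta>\<^sub>A(u) a) = \<eta>\<^sub>B(u) F(a) for u \<in> B follow at once from the defining relations of the two
  Nakayama automorphisms. Since \<psi> \<circ> F = \<phi>, the map a \<mapsto> F(a \<cdot>) is injective; it is
  surjective because the dual bases (x\<^sub>i, y\<^sub>i) represent every k-linear form on A, in
  particular \<psi> \<circ> \<chi>, as \<phi>(a \<cdot>). Finally, A is spanned over k \<subseteq> B by the x\<^sub>i, so a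
  projective splitting of A\<^sub>B only involves finitely many coordinates.
*)

lemma right_B_linear_in: "right_B_linear B f \<Longrightarrow> f a \<in> B"
  unfolding right_B_linear_def by blast

lemma right_B_linear_add: "right_B_linear B f \<Longrightarrow> f (a + a') = f a + f a'"
  unfolding right_B_linear_def by blast

lemma right_B_linear_mult: "right_B_linear B f \<Longrightarrow> b \<in> B \<Longrightarrow> f (a * b) = f a * b"
  unfolding right_B_linear_def by blast

lemma right_B_linear_zero: "right_B_linear B f \<Longrightarrow> f 0 = 0"
  using right_B_linear_add[of B f 0 0] by simp

lemma right_B_linear_sum:
  assumes "right_B_linear B f"
  shows "f (sum g I) = (\<Sum>i\<in>I. f (g i))"
proof (cases "finite I")
  case True
  then show ?thesis
    by (induction I rule: finite_induct)
      (simp_all add: right_B_linear_zero[OF assms] right_B_linear_add[OF assms])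
qed (simp add: right_B_linear_zero[OF assms])

lemma fg_projective_right_if_spanned:
  fixes g :: "nat \<Rightarrow> 'a::ring_1" and n :: nat
  assumes proj: "projective_right B"
    and span: "\<And>a. \<exists>c. (\<forall>i<n. c i \<in> B) \<and> (\<Sum>i<n. g i * c i) = a"
  shows "fg_projective_right B"
proof -
  from proj obtain f :: "'a \<Rightarrow> 'a \<Rightarrow> 'a" where
    lin: "\<And>u. right_B_linear B (f u)" and fin: "\<And>a. finite {u. f u a \<noteq> 0}"
    and dual: "\<And>a. (\<Sum>u\<in>{u. f u a \<noteq> 0}. u * f u a) = a"
    unfolding projective_right_def by blast
  define X where "X = (\<Union>i<n. {u. f u (g i) \<noteq> 0})"
  have "finite X" unfolding X_def using fin by simp
  have vanish: "f u a = 0" if "u \<notin> X" for u a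
  proof -
    obtain c where c: "\<forall>i<n. c i \<in> B" "(\<Sum>i<n. g i * c i) = a" using span by blast
    have "f u a = (\<Sum>i<n. f u (g i * c i))"
      using c(2) right_B_linear_sum[OF lin] by metis
    also have "\<dots> = (\<Sum>i<n. f u (g i) * c i)"
      using c(1) by (simp add: right_B_linear_mult[OF lin])
    also have "\<dots> = 0" using that unfolding X_def by (intro sum.neutral) auto
    finally show ?thesis .
  qed
  have dual_X: "(\<Sum>u\<in>X. u * f u a) = a" for a
  proof -
    have "(\<Sum>u\<in>X. u * f u a) = (\<Sum>u\<in>{u. f u a \<noteq> 0}. u * f u a)"
      by (rule sum.mono_neutral_right[OF \<open>finite X\<close>]) (use vanish in auto)
    then show ?thesis using dual by simp
  qed
  obtain h where h: "bij_betw h {..<card X} X"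
    using ex_bij_betw_nat_finite[OF \<open>finite X\<close>] by (auto simp: atLeast0LessThan)
  have "(\<Sum>i<card X. h i * f (h i) a) = a" for a
    using sum.reindex_bij_betw[OF h, of "\<lambda>u. u * f u a"] dual_X[of a] by simp
  then show ?thesis unfolding fg_projective_right_def using lin
    by (intro exI[of _ "card X"] exI[of _ h] exI[of _ "\<lambda>i. f (h i)"]) auto
qed

lemma ring_aut_on_comp:
  assumes f: "ring_aut_on B f" and g: "ring_aut_on B g"
  shows "ring_aut_on B (f \<circ> g)"
proof -
  have "g a \<in> B" if "a \<in> B" for a using g that by (auto simp: ring_aut_on_def bij_betw_def)
  with f g show ?thesis by (auto simp: ring_aut_on_def intro: bij_betw_trans)
qed

lemma ring_aut_on_inv:
  assumes f: "ring_aut_on UNIV f" and f_B: "f ` B = B"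
  shows "ring_aut_on B (inv f)"
proof -
  have "bij f" using f by (simp add: ring_aut_on_def)
  then have f_inv: "f (inv f a) = a" and inv_f: "inv f (f a) = a" for a
    by (simp_all add: bij_is_surj surj_f_inv_f bij_is_inj)
  have hom: "f (a + b) = f a + f b" "f (a * b) = f a * f b" for a b
    using f by (simp_all add: ring_aut_on_def)
  have "bij_betw (inv f) B B"
    using \<open>bij f\<close> f_B by (metis bij_betw_subset bij_imp_bij_inv image_inv_f_f
      bij_betw_imp_inj_on subset_UNIV)
  moreover have "inv f 1 = 1" using f inv_f by (metis ring_aut_on_def)
  moreover have "inv f (a + b) = inv f a + inv f b" for a b by (metis hom(1) f_inv inv_f)
  moreover have "inv f (a * b) = inv f a * inv f b" for a b by (metis hom(2) f_inv inv_f)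
  ultimately show ?thesis by (simp add: ring_aut_on_def)
qed

locale frobenius_algebra =
  fixes \<iota> :: "'k::comm_ring_1 \<Rightarrow> 'a::ring_1" and S :: "'a set"
    and \<phi> :: "'a \<Rightarrow> 'k" and x y :: "nat \<Rightarrow> 'a" and n :: nat
  assumes k_algebra: "k_algebra \<iota>" and subalgebra: "subalgebra \<iota> S"
    and coords: "frobenius_coords \<iota> S \<phi> x y n"
begin

lemma iota_commute: "\<iota> c * a = a * \<iota> c"
  using k_algebra unfolding k_algebra_def by blast

lemma iota_left_commute: "a * (\<iota> c * t) = \<iota> c * (a * t)"
  by (metis iota_commute mult.assoc)

lemma iota_add: "\<iota> (c + d) = \<iota> c + \<iota> d"
  using k_algebra unfolding k_algebra_def by blast

lemma one_mem: "1 \<in> S" and iota_mem: "\<iota> c \<in> S"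
  and add_mem: "a \<in> S \<Longrightarrow> b \<in> S \<Longrightarrow> a + b \<in> S"
  and mult_mem: "a \<in> S \<Longrightarrow> b \<in> S \<Longrightarrow> a * b \<in> S"
  and uminus_mem: "a \<in> S \<Longrightarrow> - a \<in> S"
  using subalgebra by (simp_all add: subalgebra_def)

lemma zero_mem: "0 \<in> S"
  using add_mem[OF one_mem uminus_mem[OF one_mem]] by simp

lemma sum_mem: "(\<And>i. i \<in> I \<Longrightarrow> f i \<in> S) \<Longrightarrow> sum f I \<in> S"
  by (induction I rule: infinite_finite_induct) (auto intro: add_mem zero_mem)

lemma x_mem: "i < n \<Longrightarrow> x i \<in> S" and y_mem: "i < n \<Longrightarrow> y i \<in> S"
  using coords by (simp_all add: frobenius_coords_def)

lemma expand_left: "a \<in> S \<Longrightarrow> (\<Sum>i<n. x i * \<iota> (\<phi> (y i * a))) = a"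
  and expand_right: "a \<in> S \<Longrightarrow> (\<Sum>i<n. \<iota> (\<phi> (a * x i)) * y i) = a"
  using coords by (simp_all add: frobenius_coords_def)

lemma phi_linear: "k_linear_on \<iota> S \<phi>"
  using coords by (simp add: frobenius_coords_def)

lemma linear_zero: "k_linear_on \<iota> S \<theta> \<Longrightarrow> \<theta> 0 = 0"
  using zero_mem by (fastforce simp: k_linear_on_def dest: bspec[of _ _ 0])

lemma linear_sum:
  assumes "k_linear_on \<iota> S \<theta>" and "\<And>i. i \<in> I \<Longrightarrow> f i \<in> S"
  shows "\<theta> (sum f I) = (\<Sum>i\<in>I. \<theta> (f i))"
  using assms(2)
proof (induction I rule: infinite_finite_induct)
  case (insert i I)
  then show ?case using assms(1) by (simp add: k_linear_on_def sum_mem)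
qed (simp_all add: linear_zero[OF assms(1)])

lemma linear_scale: "k_linear_on \<iota> S \<theta> \<Longrightarrow> a \<in> S \<Longrightarrow> \<theta> (\<iota> c * a) = c * \<theta> a"
  by (simp add: k_linear_on_def)

lemma linear_scale_right: "k_linear_on \<iota> S \<theta> \<Longrightarrow> a \<in> S \<Longrightarrow> \<theta> (a * \<iota> c) = c * \<theta> a"
  by (simp add: linear_scale flip: iota_commute)

lemma k_linear_on_phi_mult_left: "a \<in> S \<Longrightarrow> k_linear_on \<iota> S (\<lambda>t. \<phi> (a * t))"
  using phi_linear mult_mem by (simp add: k_linear_on_def distrib_left iota_left_commute)

lemma k_linear_on_phi_mult_right: "a \<in> S \<Longrightarrow> k_linear_on \<iota> S (\<lambda>t. \<phi> (t * a))"
  using phi_linear mult_mem by (simp add: k_linear_on_def distrib_right mult.assoc)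

lemma represent_functional_left:
  assumes \<theta>: "k_linear_on \<iota> S \<theta>" and t: "t \<in> S"
  shows "\<phi> ((\<Sum>i<n. \<iota> (\<theta> (x i)) * y i) * t) = \<theta> t"
proof -
  have "\<phi> ((\<Sum>i<n. \<iota> (\<theta> (x i)) * y i) * t) = \<phi> (\<Sum>i<n. \<iota> (\<theta> (x i)) * (y i * t))"
    by (simp add: sum_distrib_right mult.assoc)
  also have "\<dots> = (\<Sum>i<n. \<theta> (x i) * \<phi> (y i * t))"
    using t by (subst linear_sum[OF phi_linear])
      (auto intro!: sum.cong iota_mem mult_mem y_mem simp: linear_scale[OF phi_linear] mult_mem y_mem)
  also have "\<dots> = (\<Sum>i<n. \<theta> (x i * \<iota> (\<phi> (y i * t))))"
    by (simp add: linear_scale_right[OF \<theta>] x_mem mult.commute)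
  also have "\<dots> = \<theta> (\<Sum>i<n. x i * \<iota> (\<phi> (y i * t)))"
    by (rule linear_sum[OF \<theta>, symmetric]) (simp add: mult_mem x_mem iota_mem)
  also have "\<dots> = \<theta> t" by (simp add: expand_left t)
  finally show ?thesis .
qed

lemma represent_functional_right:
  assumes \<theta>: "k_linear_on \<iota> S \<theta>" and t: "t \<in> S"
  shows "\<phi> (t * (\<Sum>i<n. x i * \<iota> (\<theta> (y i)))) = \<theta> t"
proof -
  have "\<phi> (t * (\<Sum>i<n. x i * \<iota> (\<theta> (y i)))) = \<phi> (\<Sum>i<n. \<iota> (\<theta> (y i)) * (t * x i))"
    by (simp add: sum_distrib_left mult.assoc iota_commute)
  also have "\<dots> = (\<Sum>i<n. \<theta> (y i) * \<phi> (t * x i))"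
    using t by (subst linear_sum[OF phi_linear])
      (auto intro!: sum.cong iota_mem mult_mem x_mem simp: linear_scale[OF phi_linear] mult_mem x_mem)
  also have "\<dots> = (\<Sum>i<n. \<theta> (\<iota> (\<phi> (t * x i)) * y i))"
    by (simp add: linear_scale[OF \<theta>] y_mem mult.commute)
  also have "\<dots> = \<theta> (\<Sum>i<n. \<iota> (\<phi> (t * x i)) * y i)"
    by (rule linear_sum[OF \<theta>, symmetric]) (simp add: mult_mem y_mem iota_mem)
  also have "\<dots> = \<theta> t" by (simp add: expand_right t)
  finally show ?thesis .
qed

lemma nondegenerate_left:
  assumes "e \<in> S" "e' \<in> S" "\<And>t. t \<in> S \<Longrightarrow> \<phi> (e * t) = \<phi> (e' * t)"
  shows "e = e'"
proof -
  have "e = (\<Sum>i<n. \<iota> (\<phi> (e * x i)) * y i)" using expand_right[OF assms(1)] by simp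
  also have "\<dots> = (\<Sum>i<n. \<iota> (\<phi> (e' * x i)) * y i)" by (simp add: assms(3) x_mem)
  also have "\<dots> = e'" using expand_right[OF assms(2)] .
  finally show ?thesis .
qed

lemma nondegenerate_right:
  assumes "e \<in> S" "e' \<in> S" "\<And>t. t \<in> S \<Longrightarrow> \<phi> (t * e) = \<phi> (t * e')"
  shows "e = e'"
proof -
  have "e = (\<Sum>i<n. x i * \<iota> (\<phi> (y i * e)))" using expand_left[OF assms(1)] by simp
  also have "\<dots> = (\<Sum>i<n. x i * \<iota> (\<phi> (y i * e')))" by (simp add: assms(3) y_mem)
  also have "\<dots> = e'" using expand_left[OF assms(2)] .
  finally show ?thesis .
qed

abbreviation nakayama :: "'a \<Rightarrow> 'a" where "nakayama \<equiv> nakayama_on S \<phi>"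

lemma nakayama_exists:
  assumes a: "a \<in> S"
  shows "\<exists>!e. e \<in> S \<and> (\<forall>t\<in>S. \<phi> (e * t) = \<phi> (t * a))"
proof (rule ex1I)
  let ?e = "\<Sum>i<n. \<iota> (\<phi> (x i * a)) * y i"
  have e: "?e \<in> S" "\<And>t. t \<in> S \<Longrightarrow> \<phi> (?e * t) = \<phi> (t * a)"
    using represent_functional_left[OF k_linear_on_phi_mult_right[OF a]]
    by (auto intro!: sum_mem mult_mem iota_mem y_mem)
  then show "?e \<in> S \<and> (\<forall>t\<in>S. \<phi> (?e * t) = \<phi> (t * a))" by blast
  show "e = ?e" if "e \<in> S \<and> (\<forall>t\<in>S. \<phi> (e * t) = \<phi> (t * a))" for e
    using that e by (intro nondegenerate_left[of e ?e]) auto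
qed

lemma nakayama_mem: "a \<in> S \<Longrightarrow> nakayama a \<in> S"
  and nakayama_phi: "a \<in> S \<Longrightarrow> t \<in> S \<Longrightarrow> \<phi> (nakayama a * t) = \<phi> (t * a)"
  using theI'[OF nakayama_exists] unfolding nakayama_on_def by auto

lemma nakayama_eqI:
  "a \<in> S \<Longrightarrow> e \<in> S \<Longrightarrow> (\<And>t. t \<in> S \<Longrightarrow> \<phi> (e * t) = \<phi> (t * a)) \<Longrightarrow> nakayama a = e"
  by (rule nondegenerate_left) (auto simp: nakayama_mem nakayama_phi)

lemma inj_on_nakayama: "inj_on nakayama S"
proof
  fix a a' assume a: "a \<in> S" and a': "a' \<in> S" and eq: "nakayama a = nakayama a'"
  show "a = a'"
    by (rule nondegenerate_right[OF a a']) (metis a a' eq nakayama_phi)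
qed

lemma nakayama_image: "nakayama ` S = S"
proof
  show "nakayama ` S \<subseteq> S" using nakayama_mem by blast
  show "S \<subseteq> nakayama ` S"
  proof
    fix a assume a: "a \<in> S"
    let ?e = "\<Sum>i<n. x i * \<iota> (\<phi> (a * y i))"
    have "?e \<in> S" by (auto intro!: sum_mem mult_mem iota_mem x_mem)
    moreover have "a = nakayama ?e"
      using represent_functional_right[OF k_linear_on_phi_mult_left[OF a]]
      by (intro nakayama_eqI[OF \<open>?e \<in> S\<close> a, symmetric]) simp
    ultimately show "a \<in> nakayama ` S" by (rule image_eqI[rotated])
  qed
qed

lemma nakayama_one: "nakayama 1 = 1"
  by (rule nakayama_eqI) (simp_all add: one_mem)

lemma nakayama_add:
  assumes a: "a \<in> S" and b: "b \<in> S"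
  shows "nakayama (a + b) = nakayama a + nakayama b"
proof (rule nakayama_eqI)
  show "a + b \<in> S" "nakayama a + nakayama b \<in> S"
    using a b by (simp_all add: add_mem nakayama_mem)
  fix t assume "t \<in> S"
  then show "\<phi> ((nakayama a + nakayama b) * t) = \<phi> (t * (a + b))"
    using phi_linear a b
    by (simp add: k_linear_on_def distrib_left distrib_right mult_mem nakayama_mem nakayama_phi)
qed

lemma nakayama_mult:
  assumes a: "a \<in> S" and b: "b \<in> S"
  shows "nakayama (a * b) = nakayama a * nakayama b"
proof (rule nakayama_eqI)
  show "a * b \<in> S" "nakayama a * nakayama b \<in> S"
    using a b by (simp_all add: mult_mem nakayama_mem)
  fix t assume t: "t \<in> S"
  have "\<phi> (nakayama a * (nakayama b * t)) = \<phi> (nakayama b * (t * a))"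
    using a b t by (simp add: nakayama_phi nakayama_mem mult_mem mult.assoc)
  also have "\<dots> = \<phi> (t * (a * b))"
    using a b t by (simp add: nakayama_phi mult_mem mult.assoc)
  finally show "\<phi> (nakayama a * nakayama b * t) = \<phi> (t * (a * b))"
    by (simp add: mult.assoc)
qed

lemma ring_aut_on_nakayama: "ring_aut_on S nakayama"
  unfolding ring_aut_on_def bij_betw_def
  by (simp add: inj_on_nakayama nakayama_image nakayama_one nakayama_add nakayama_mult)

end

locale frobenius_extension =
  A: frobenius_algebra \<iota> UNIV \<phi> x y n + B: frobenius_algebra \<iota> B \<psi> z w m
  for \<iota> :: "'k::comm_ring_1 \<Rightarrow> 'a::ring_1" and B :: "'a set"
    and \<phi> :: "'a \<Rightarrow> 'k" and x y :: "nat \<Rightarrow> 'a" and n :: nat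
    and \<psi> :: "'a \<Rightarrow> 'k" and z w :: "nat \<Rightarrow> 'a" and m :: nat
begin

definition frobenius_hom :: "'a \<Rightarrow> 'a" where
  "frobenius_hom a = (\<Sum>j<m. \<iota> (\<phi> (a * z j)) * w j)"

lemma frobenius_hom_mem: "frobenius_hom a \<in> B"
  unfolding frobenius_hom_def by (auto intro!: B.sum_mem B.mult_mem B.iota_mem B.y_mem)

lemma psi_frobenius_hom: "c \<in> B \<Longrightarrow> \<psi> (frobenius_hom a * c) = \<phi> (a * c)"
  using B.represent_functional_left[of "\<lambda>c. \<phi> (a * c)"] A.k_linear_on_phi_mult_left[of a]
  by (simp add: frobenius_hom_def k_linear_on_def)

lemma frobenius_hom_eqI:
  "d \<in> B \<Longrightarrow> (\<And>c. c \<in> B \<Longrightarrow> \<psi> (d * c) = \<phi> (a * c)) \<Longrightarrow> frobenius_hom a = d"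
  by (rule B.nondegenerate_left) (simp_all add: frobenius_hom_mem psi_frobenius_hom)

lemma frobenius_hom_add: "frobenius_hom (a + a') = frobenius_hom a + frobenius_hom a'"
  using A.phi_linear
  by (simp add: frobenius_hom_def k_linear_on_def distrib_right A.iota_add sum.distrib)

lemma frobenius_hom_right_linear: "b \<in> B \<Longrightarrow> frobenius_hom (a * b) = frobenius_hom a * b"
  by (rule frobenius_hom_eqI)
    (simp_all add: B.mult_mem frobenius_hom_mem psi_frobenius_hom mult.assoc)

lemma frobenius_hom_nakayama:
  assumes u: "u \<in> B"
  shows "frobenius_hom (A.nakayama u * a) = B.nakayama u * frobenius_hom a"
proof (rule frobenius_hom_eqI)
  show "B.nakayama u * frobenius_hom a \<in> B"
    using u by (simp add: B.mult_mem B.nakayama_mem frobenius_hom_mem)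
  fix c assume c: "c \<in> B"
  have "\<psi> (B.nakayama u * (frobenius_hom a * c)) = \<psi> (frobenius_hom a * (c * u))"
    using u c by (simp add: B.nakayama_phi B.mult_mem frobenius_hom_mem mult.assoc)
  also have "\<dots> = \<phi> (A.nakayama u * (a * c))"
    using u c by (simp add: psi_frobenius_hom B.mult_mem A.nakayama_phi mult.assoc)
  finally show "\<psi> (B.nakayama u * frobenius_hom a * c) = \<phi> (A.nakayama u * a * c)"
    by (simp add: mult.assoc)
qed

lemma right_B_linear_frobenius_hom_mult: "right_B_linear B (\<lambda>t. frobenius_hom (a * t))"
  by (simp add: right_B_linear_def frobenius_hom_mem distrib_left frobenius_hom_add
    frobenius_hom_right_linear flip: mult.assoc)

lemma inj_frobenius_hom_mult: "inj (\<lambda>a t. frobenius_hom (a * t))"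
proof (rule injI)
  fix a a' assume eq: "(\<lambda>t. frobenius_hom (a * t)) = (\<lambda>t. frobenius_hom (a' * t))"
  show "a = a'"
  proof (rule A.nondegenerate_left)
    fix t
    have "\<phi> (a * t) = \<psi> (frobenius_hom (a * t))"
      using psi_frobenius_hom[OF B.one_mem] by simp
    also have "\<dots> = \<phi> (a' * t)"
      using psi_frobenius_hom[OF B.one_mem] eq by (metis mult_1_right)
    finally show "\<phi> (a * t) = \<phi> (a' * t)" .
  qed simp_all
qed

lemma hom_right_eq_frobenius_hom_mult:
  assumes "\<chi> \<in> hom_right B"
  shows "\<exists>a. \<chi> = (\<lambda>t. frobenius_hom (a * t))"
proof -
  have \<chi>: "right_B_linear B \<chi>" using assms by (simp add: hom_right_def)
  have "\<psi> (\<chi> (\<iota> c * t)) = c * \<psi> (\<chi> t)" for c t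
    by (simp add: A.iota_commute right_B_linear_mult[OF \<chi> B.iota_mem] right_B_linear_in[OF \<chi>]
      B.linear_scale_right[OF B.phi_linear])
  then have "k_linear_on \<iota> UNIV (\<lambda>t. \<psi> (\<chi> t))"
    using B.phi_linear
    by (simp add: k_linear_on_def right_B_linear_add[OF \<chi>] right_B_linear_in[OF \<chi>])
  from A.represent_functional_left[OF this] obtain a where a: "\<And>t. \<phi> (a * t) = \<psi> (\<chi> t)"
    by blast
  have "\<chi> t = frobenius_hom (a * t)" for t
    by (rule frobenius_hom_eqI[symmetric])
      (simp_all add: right_B_linear_in[OF \<chi>] a mult.assoc flip: right_B_linear_mult[OF \<chi>])
  then show ?thesis by blast
qed

lemma bij_betw_frobenius_hom_mult: "bij_betw (\<lambda>a t. frobenius_hom (a * t)) UNIV (hom_right B)"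
  unfolding bij_betw_def
  using inj_frobenius_hom_mult right_B_linear_frobenius_hom_mult hom_right_eq_frobenius_hom_mult
  by (fastforce simp: hom_right_def image_iff)

lemma ring_aut_on_nakayama_twist:
  assumes "A.nakayama ` B = B"
  shows "ring_aut_on B (\<lambda>b. B.nakayama (inv A.nakayama b))"
  using ring_aut_on_comp[OF B.ring_aut_on_nakayama ring_aut_on_inv[OF A.ring_aut_on_nakayama assms]]
  by (simp add: comp_def)

lemma bimod_iso_twisted_dual_frobenius_hom:
  assumes "A.nakayama ` B = B"
  shows "bimod_iso_twisted_dual B (\<lambda>b. B.nakayama (inv A.nakayama b))
    (\<lambda>a t. frobenius_hom (a * t))"
proof -
  have "frobenius_hom (b * a) = B.nakayama (inv A.nakayama b) * frobenius_hom a"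
    if b: "b \<in> B" for a b
  proof -
    have "inv A.nakayama b \<in> B"
      using ring_aut_on_inv[OF A.ring_aut_on_nakayama assms] b
      by (auto simp: ring_aut_on_def bij_betw_def)
    moreover have "A.nakayama (inv A.nakayama b) = b"
      using A.nakayama_image by (simp add: surj_f_inv_f)
    ultimately show ?thesis by (metis frobenius_hom_nakayama)
  qed
  then show ?thesis
    unfolding bimod_iso_twisted_dual_def
    by (simp add: bij_betw_frobenius_hom_mult distrib_right frobenius_hom_add mult.assoc)
qed

lemma fg_projective_right_extension:
  assumes "projective_right B"
  shows "fg_projective_right B"
proof (rule fg_projective_right_if_spanned[OF assms])
  fix a
  show "\<exists>c. (\<forall>i<n. c i \<in> B) \<and> (\<Sum>i<n. x i * c i) = a"
    using A.expand_left[of a] by (intro exI[of _ "\<lambda>i. \<iota> (\<phi> (y i * a))"]) (simp add: B.iota_mem)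
qed

end

theorem mainTheorem13:
  fixes \<iota> :: "'k::comm_ring_1 \<Rightarrow> 'a::ring_1"
    and B :: "'a set"
    and \<phi> \<psi> :: "'a \<Rightarrow> 'k"
    and x y z w :: "nat \<Rightarrow> 'a"
    and n m :: nat
  assumes "k_algebra \<iota>"
    and "frobenius_coords \<iota> UNIV \<phi> x y n"
    and "subalgebra \<iota> B"
    and "frobenius_coords \<iota> B \<psi> z w m"
    and "projective_right B"
    and "nakayama_on UNIV \<phi> ` B = B"
  shows "let \<eta>A = nakayama_on UNIV \<phi>; \<eta>B = nakayama_on B \<psi>;
             \<beta> = (\<lambda>b. \<eta>B (inv \<eta>A b));
             F = (\<lambda>a. \<Sum>j<m. \<iota> (\<phi> (a * z j)) * w j)
         in beta_frobenius_ext B \<beta> \<and> bimod_iso_twisted_dual B \<beta> (\<lambda>a t. F (a * t))"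
proof -
  interpret frobenius_extension \<iota> B \<phi> x y n \<psi> z w m
    using assms(1-4) by unfold_locales (simp_all add: subalgebra_def)
  show ?thesis
    using fg_projective_right_extension[OF assms(5)] ring_aut_on_nakayama_twist[OF assms(6)]
      bimod_iso_twisted_dual_frobenius_hom[OF assms(6)]
    by (auto simp: Let_def beta_frobenius_ext_def frobenius_hom_def)
qed

end
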